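(* For every integer $n\geq 1$, the sequence $\Lambda_n$ of chains (defined in the context) is a 3-Gray code, i.e., any two consecutive chains in $\Lambda_n$, viewed as strings over the alphabet $\{0,1,*\}$, differ in at most three positions.
   Context: Let $D$ be the set of all bitstrings (including the empty string $\varepsilon$) with equally many $0$s and $1$s such that every prefix contains at least as many $0$s as $1$s. Each chain of the Greene–Kleitman symmetric chain decomposition of $Q_n$ (the hypercube on $\{0,1\}^n$) is encoded as a string of length $n$ over $\{0,1,*\}$ of the form $u_0*u_1*\cdots*u_{h-1}*u_h$ with $u_0,\ldots,u_h\in D$; its vertices are obtained by replacing the $*$s by $i$ ones followed by $h-i$ zeros, $i=0,\ldots,h$, and every such string occurs as a chain. The length $|C|$ of a chain $C$ is its number of $*$s. For a string $C$ over $\{0,1,*\}$ with at least two $*$s, $f(C)$ (resp. $\ell(C)$) denotes the string obtained by replacing the first two (resp. last two) $*$s by $0$ and $1$, respectively. For a sequence $\Gamma$, $\Gamma^R$ is its reversal, and $*C*$, $0C1$ denote concatenations. The sequences $\Lambda_n$ are defined inductively: for even $n$, $\Lambda_0:=\varepsilon$ (the one-element sequence consisting of the empty chain) and for odd $n$, $\Lambda_1:=*$. For $n\ge 0$, given $\Lambda_n=C_1,\ldots,C_N$, set $\Lambda_{n+2}:=\rho(C_1),\ldots,\rho(C_N)$ (concatenation of sequences), where $\rho(C):=\lambda(C)$ if $|C|\equiv n \pmod 4$ and $\rho(C):=\lambda(C)^R$ otherwise, and where for even $n$: $\lambda(C):= *C*,\ f( *C* ),\ f(\ell( *C* )),\ \ell(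 *C* )$ if $|C|\ge 2$, and $\lambda(C):=*C*,\ 0C1$ if $|C|=0$; for odd $n$: $\lambda(C):=*C*,\ \ell( *C* ),\ \ell(f( *C* )),\ f( *C* )$ if $|C|\ge 3$, and $\lambda(C):=*C*,\ \ell( *C* ),\ f( *C* )$ if $|C|=1$. *)

theory Defs
  imports Main
begin

datatype sym = Zero | One | Star

type_synonym chain = "sym list"

text \<open>Length of a chain = number of stars.\<close>
definition nstars :: "chain \<Rightarrow> nat" where
  "nstars C = length (filter (\<lambda>c. c = Star) C)"

fun repl1 :: "sym \<Rightarrow> chain \<Rightarrow> chain" where
  "repl1 b [] = []"
| "repl1 b (c # cs) = (if c = Star then b # cs else c # repl1 b cs)"

fun repl2 :: "sym \<Rightarrow> sym \<Rightarrow> chain \<Rightarrow> chain" where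
  "repl2 a b [] = []"
| "repl2 a b (c # cs) =
     (if c = Star then a # repl1 b cs else c # repl2 a b cs)"

definition ffirst :: "chain \<Rightarrow> chain" where
  "ffirst C = repl2 Zero One C"

definition llast :: "chain \<Rightarrow> chain" where
  "llast C = rev (repl2 One Zero (rev C))"

definition wrap :: "chain \<Rightarrow> chain" where
  "wrap C = Star # C @ [Star]"

definition lam :: "nat \<Rightarrow> chain \<Rightarrow> chain list" where
  "lam n C =
    (if even n then
       (if nstars C \<ge> 2
        then [wrap C, ffirst (wrap C), ffirst (llast (wrap C)), llast (wrap C)]
        else [wrap C, Zero # C @ [One]])
     else
       (if nstars C \<ge> 3
        then [wrap C, llast (wrap C), llast (ffirst (wrap C)), ffirst (wrap C)]
        else [wrap C, llast (wrap C), ffirst (wrap C)]))"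

definition rho :: "nat \<Rightarrow> chain \<Rightarrow> chain list" where
  "rho n C = (if nstars C mod 4 = n mod 4 then lam n C else rev (lam n C))"

fun Lambda :: "nat \<Rightarrow> chain list" where
  "Lambda 0 = [[]]"
| "Lambda (Suc 0) = [[Star]]"
| "Lambda (Suc (Suc n)) = concat (map (rho n) (Lambda n))"

definition hamming :: "chain \<Rightarrow> chain \<Rightarrow> nat" where
  "hamming x y = card {j. j < length x \<and> j < length y \<and> x ! j \<noteq> y ! j}"

end

theory Submission
  imports Defs
begin

(* Consecutive chains of Lambda_n differ in one of three specific shapes: two stars fixed to
   0 and 1 (pair_fix), two stars fixed to 0 together with a later 0 turned into 1
   (pair_fix_shift), or, for chains with a single star, that star moved to the right past a
   0 and a 1 (star_shift); each shape changes at most three positions.  Inside a block rho(C)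
   this is read off from lambda(C).  At the border of two blocks rho(C), rho(C') the chains
   meeting are *C* or the last chain of lambda(C), and *C'* or the last chain of lambda(C'),
   and these operations carry the shape relating C and C' in Lambda_n to one of the shapes
   in Lambda_(n+2).  For this to go through, the invariant (link) records which shapes occur,
   depending on whether rho(C) is lambda(C) or its reversal. *)

lemma mod_4_cases: "a mod 4 = 0 \<or> a mod 4 = 1 \<or> a mod 4 = 2 \<or> a mod 4 = 3" for a :: nat
  using mod_less_divisor[of 4 a] by linarith

lemma Suc_Suc_mod_4: "Suc (Suc a) mod 4 = (a mod 4 + 2) mod 4" for a :: nat
  by (metis add_2_eq_Suc' mod_add_left_eq)

lemma mod_4_Suc_Suc_cancel: "Suc (Suc a) mod 4 = Suc (Suc b) mod 4 \<longleftrightarrow> a mod 4 = b mod 4"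
  for a b :: nat
  using mod_4_cases[of a] mod_4_cases[of b] unfolding Suc_Suc_mod_4 by (elim disjE) simp_all

lemma mod_4_ne_Suc_Suc: "a mod 4 = b mod 4 \<Longrightarrow> a mod 4 \<noteq> Suc (Suc b) mod 4"
  for a b :: nat
  using mod_4_cases[of b] unfolding Suc_Suc_mod_4 by (elim disjE) simp_all

lemma mod_4_Suc_Suc_swap: "Suc (Suc a) mod 4 = b mod 4 \<longleftrightarrow> a mod 4 = Suc (Suc b) mod 4"
  for a b :: nat
  using mod_4_cases[of a] mod_4_cases[of b] unfolding Suc_Suc_mod_4 by (elim disjE) simp_all

lemma mod_4_Suc_Suc_if_ne:
  fixes a b :: nat
  assumes "a mod 2 = b mod 2" "a mod 4 \<noteq> b mod 4"
  shows "a mod 4 = Suc (Suc b) mod 4"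
proof -
  have "even (a mod 4) \<longleftrightarrow> even (b mod 4)"
    using assms(1) by (simp add: even_iff_mod_2_eq_zero mod_mod_cancel)
  then show ?thesis
    using assms(2) mod_4_cases[of a] mod_4_cases[of b] unfolding Suc_Suc_mod_4
    by (elim disjE) simp_all
qed

lemma nstars_simps [simp]:
  "nstars [] = 0"
  "nstars (x # xs) = (if x = Star then Suc (nstars xs) else nstars xs)"
  "nstars (xs @ ys) = nstars xs + nstars ys"
  by (auto simp: nstars_def)

lemma nstars_eq_0_iff: "nstars xs = 0 \<longleftrightarrow> Star \<notin> set xs"
  by (induction xs) auto

lemma nstars_star_free [simp]: "Star \<notin> set xs \<Longrightarrow> nstars xs = 0"
  by (simp add: nstars_eq_0_iff)

lemma repl1_append_star_free [simp]: "Star \<notin> set xs \<Longrightarrow> repl1 b (xs @ ys) = xs @ repl1 b ys"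
  by (induction xs) auto

lemma repl2_append_star_free [simp]: "Star \<notin> set xs \<Longrightarrow> repl2 a b (xs @ ys) = xs @ repl2 a b ys"
  by (induction xs) auto

lemma ffirst_split:
  "Star \<notin> set u \<Longrightarrow> Star \<notin> set v \<Longrightarrow> ffirst (u @ Star # v @ Star # m) = u @ Zero # v @ One # m"
  by (simp add: ffirst_def)

lemma llast_split:
  "Star \<notin> set v \<Longrightarrow> Star \<notin> set m \<Longrightarrow> llast (u @ Star # v @ Star # m) = u @ Zero # v @ One # m"
  by (simp add: llast_def)

lemma star_in_set: "0 < nstars x \<Longrightarrow> Star \<in> set x"
  by (metis less_irrefl nstars_star_free)

lemma first_two_stars:
  assumes "2 \<le> nstars x"
  obtains u v m where "x = u @ Star # v @ Star # m" "Star \<notin> set u" "Star \<notin> set v"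
proof -
  obtain u t where x: "x = u @ Star # t" "Star \<notin> set u"
    using assms star_in_set split_list_first[of Star x] by auto
  then have "Star \<in> set t"
    using assms star_in_set by simp
  then obtain v m where "t = v @ Star # m" "Star \<notin> set v"
    using split_list_first by metis
  with x that show ?thesis by blast
qed

lemma last_two_stars:
  assumes "2 \<le> nstars x"
  obtains u v m where "x = u @ Star # v @ Star # m" "Star \<notin> set v" "Star \<notin> set m"
proof -
  obtain t m where x: "x = t @ Star # m" "Star \<notin> set m"
    using assms star_in_set split_list_last[of Star x] by auto
  then have "Star \<in> set t"
    using assms star_in_set by simp
  then obtain u v where "t = u @ Star # v" "Star \<notin> set v"
    using split_list_last by metis
  with x that show ?thesis by simp
qed

lemma single_star:
  assumes "nstars x = 1"
  obtains u v where "x = u @ Star # v" "Star \<notin> set u" "Star \<notin> set v"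
proof -
  obtain u v where x: "x = u @ Star # v" "Star \<notin> set u"
    using assms star_in_set split_list_first[of Star x] by auto
  with assms that show ?thesis by (simp add: nstars_eq_0_iff)
qed

definition pair_fix :: "chain \<Rightarrow> chain \<Rightarrow> bool" where
  "pair_fix x y \<longleftrightarrow> (\<exists>a b c. x = a @ Star # b @ Star # c \<and> y = a @ Zero # b @ One # c)"

definition pair_fix_shift :: "chain \<Rightarrow> chain \<Rightarrow> bool" where
  "pair_fix_shift x y \<longleftrightarrow>
     (\<exists>a b c d. x = a @ Star # b @ Star # c @ Zero # d \<and> y = a @ Zero # b @ Zero # c @ One # d)"

definition star_shift :: "chain \<Rightarrow> chain \<Rightarrow> bool" where
  "star_shift x y \<longleftrightarrow>
     (\<exists>a b c d. x = a @ Star # b @ Zero # c @ One # d \<and> y = a @ Zero # b @ One # c @ Star # d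
        \<and> Star \<notin> set a \<and> Star \<notin> set b \<and> Star \<notin> set c \<and> Star \<notin> set d)"

lemma pair_fixI: "pair_fix (a @ Star # b @ Star # c) (a @ Zero # b @ One # c)"
  unfolding pair_fix_def by blast

lemma pair_fix_shiftI:
  "pair_fix_shift (a @ Star # b @ Star # c @ Zero # d) (a @ Zero # b @ Zero # c @ One # d)"
  unfolding pair_fix_shift_def by blast

lemma star_shiftI:
  "Star \<notin> set a \<Longrightarrow> Star \<notin> set b \<Longrightarrow> Star \<notin> set c \<Longrightarrow> Star \<notin> set d \<Longrightarrow>
    star_shift (a @ Star # b @ Zero # c @ One # d) (a @ Zero # b @ One # c @ Star # d)"
  unfolding star_shift_def by blast

lemma nstars_pair_fix: "pair_fix x y \<Longrightarrow> nstars x = nstars y + 2"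
  unfolding pair_fix_def by auto

lemma nstars_pair_fix_shift: "pair_fix_shift x y \<Longrightarrow> nstars x = nstars y + 2"
  unfolding pair_fix_shift_def by auto

lemma nstars_star_shift: "star_shift x y \<Longrightarrow> nstars x = 1 \<and> nstars y = 1"
  unfolding star_shift_def by auto

lemma nstars_wrap [simp]: "nstars (wrap x) = nstars x + 2"
  by (simp add: wrap_def)

lemma pair_fix_wrap: "pair_fix x y \<Longrightarrow> pair_fix (wrap x) (wrap y)"
  unfolding pair_fix_def wrap_def by (metis append_Cons append_assoc)

lemma pair_fix_shift_wrap: "pair_fix_shift x y \<Longrightarrow> pair_fix_shift (wrap x) (wrap y)"
  unfolding pair_fix_shift_def wrap_def by (metis append_Cons append_assoc)

lemma pair_fix_ffirst: "2 \<le> nstars x \<Longrightarrow> pair_fix x (ffirst x)"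
  by (metis first_two_stars ffirst_split pair_fixI)

lemma pair_fix_llast: "2 \<le> nstars x \<Longrightarrow> pair_fix x (llast x)"
  by (metis last_two_stars llast_split pair_fixI)

lemma ffirst_llast_commute:
  assumes "4 \<le> nstars x"
  shows "ffirst (llast x) = llast (ffirst x)"
proof -
  have "2 \<le> nstars x" using assms by simp
  then obtain u v r where x: "x = u @ Star # v @ Star # r" "Star \<notin> set u" "Star \<notin> set v"
    by (rule first_two_stars)
  then have "2 \<le> nstars r" using assms by simp
  then obtain p q s where "r = p @ Star # q @ Star # s" "Star \<notin> set q" "Star \<notin> set s"
    by (rule last_two_stars)
  with x show ?thesis
    using llast_split[of q s "u @ Star # v @ Star # p"] llast_split[of q s "u @ Zero # v @ One # p"]
      ffirst_split[of u v] by simp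
qed

lemma filter_zip_same [simp]: "filter (\<lambda>p. fst p \<noteq> snd p) (zip xs xs) = []"
  by (induction xs) auto

lemma hamming_conv_zip: "hamming x y = length (filter (\<lambda>p. fst p \<noteq> snd p) (zip x y))"
  unfolding hamming_def length_filter_conv_card by (rule arg_cong[where f = card]) auto

lemma hamming_commute: "hamming x y = hamming y x"
  unfolding hamming_def by (rule arg_cong[where f = card]) auto

lemma hamming_pair_fix: "pair_fix x y \<Longrightarrow> hamming x y \<le> 2"
  unfolding pair_fix_def hamming_conv_zip by auto

lemma hamming_pair_fix_shift: "pair_fix_shift x y \<Longrightarrow> hamming x y \<le> 3"
  unfolding pair_fix_shift_def hamming_conv_zip by auto

lemma hamming_star_shift: "star_shift x y \<Longrightarrow> hamming x y \<le> 3"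
  unfolding star_shift_def hamming_conv_zip by auto

definition lead_fix :: "nat \<Rightarrow> chain \<Rightarrow> chain" where
  "lead_fix n x = (if even n then ffirst x else llast x)"

definition end_fix :: "nat \<Rightarrow> chain \<Rightarrow> chain" where
  "end_fix n x = (if even n then llast x else ffirst x)"

lemma lead_fix_Suc_Suc [simp]: "lead_fix (Suc (Suc n)) = lead_fix n"
  by (simp add: lead_fix_def fun_eq_iff)

lemma pair_fix_lead_fix: "2 \<le> nstars x \<Longrightarrow> pair_fix x (lead_fix n x)"
  by (simp add: lead_fix_def pair_fix_ffirst pair_fix_llast)

lemma pair_fix_end_fix: "2 \<le> nstars x \<Longrightarrow> pair_fix x (end_fix n x)"
  by (simp add: end_fix_def pair_fix_ffirst pair_fix_llast)

lemma nstars_lead_fix: "2 \<le> nstars x \<Longrightarrow> nstars x = nstars (lead_fix n x) + 2"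
  by (rule nstars_pair_fix[OF pair_fix_lead_fix])

lemma nstars_end_fix: "2 \<le> nstars x \<Longrightarrow> nstars x = nstars (end_fix n x) + 2"
  by (rule nstars_pair_fix[OF pair_fix_end_fix])

lemma lead_fix_end_fix_commute:
  "4 \<le> nstars x \<Longrightarrow> lead_fix n (end_fix n x) = end_fix n (lead_fix n x)"
  by (simp add: lead_fix_def end_fix_def ffirst_llast_commute)

lemma lam_long:
  assumes "2 \<le> nstars C" "nstars C mod 2 = n mod 2"
  shows "lam n C =
    [wrap C, lead_fix n (wrap C), lead_fix n (end_fix n (wrap C)), end_fix n (wrap C)]"
proof -
  have "odd n \<Longrightarrow> 3 \<le> nstars C"
    using assms by (cases "nstars C = 2") (auto simp: odd_iff_mod_2_eq_one)
  then show ?thesis using assms(1) by (auto simp: lam_def lead_fix_def end_fix_def)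
qed

lemma lam_empty:
  assumes "nstars C = 0" "even n"
  shows "lam n C = [wrap C, end_fix n (wrap C)]"
  using assms llast_split[of C "[]" "[]"]
  by (simp add: lam_def end_fix_def wrap_def nstars_eq_0_iff)

lemma lam_single:
  assumes "nstars C = 1" "odd n"
  shows "lam n C = [wrap C, lead_fix n (wrap C), end_fix n (wrap C)]"
  using assms by (simp add: lam_def lead_fix_def end_fix_def)

lemma nstars_parity_cases:
  assumes "nstars C mod 2 = n mod 2"
  obtains "2 \<le> nstars C" | "nstars C = 0" "even n" | "nstars C = 1" "odd n"
proof -
  have "2 \<le> nstars C \<or> nstars C = 0 \<and> even n \<or> nstars C = 1 \<and> odd n"
    using assms by (auto simp: even_iff_mod_2_eq_zero odd_iff_mod_2_eq_one)
  with that show ?thesis by fastforce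
qed

lemma last_lam:
  assumes "nstars C mod 2 = n mod 2"
  shows "last (lam n C) = end_fix n (wrap C)"
  by (rule nstars_parity_cases[OF assms]) (simp_all add: assms lam_long lam_empty lam_single)

lemma hd_rho:
  "nstars C mod 2 = n mod 2 \<Longrightarrow>
    hd (rho n C) = (if nstars C mod 4 = n mod 4 then wrap C else end_fix n (wrap C))"
  by (auto simp: rho_def last_lam hd_rev) (simp add: lam_def)

lemma last_rho:
  "nstars C mod 2 = n mod 2 \<Longrightarrow>
    last (rho n C) = (if nstars C mod 4 = n mod 4 then end_fix n (wrap C) else wrap C)"
  by (auto simp: rho_def last_lam last_rev) (simp add: lam_def)

(* nstars x mod 4 = n mod 4 says that the block of x in Lambda_(n+2) is lambda(x) itself, so
   it ends with end_fix n (wrap x); otherwise it is reversed and ends with wrap x. *)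
definition link :: "nat \<Rightarrow> chain \<Rightarrow> chain \<Rightarrow> bool" where
  "link n x y \<longleftrightarrow>
     (if nstars x mod 4 = n mod 4
      then (2 \<le> nstars x \<and> y = lead_fix n x) \<or> (2 \<le> nstars y \<and> x = lead_fix n y)
        \<or> (odd n \<and> star_shift y x)
      else pair_fix x y \<or> pair_fix y x \<or> pair_fix_shift x y \<or> pair_fix_shift y x \<or> star_shift x y)"

lemma hamming_link:
  assumes "link n x y"
  shows "hamming x y \<le> 3"
proof -
  have one_way: "hamming x y \<le> 3" if "pair_fix x y \<or> pair_fix_shift x y \<or> star_shift x y" for x y
    using that hamming_pair_fix hamming_pair_fix_shift hamming_star_shift by fastforce
  have "pair_fix x y \<or> pair_fix y x \<or> pair_fix_shift x y \<or> pair_fix_shift y x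
      \<or> star_shift x y \<or> star_shift y x"
    using assms pair_fix_lead_fix unfolding link_def by (auto split: if_splits)
  then show ?thesis
    using one_way[of x y] one_way[of y x] hamming_commute by metis
qed

lemma successively_link_rho_long:
  assumes "2 \<le> nstars C" and par: "nstars C mod 2 = n mod 2"
  shows "successively (link (Suc (Suc n))) (rho n C)"
proof -
  define k W X Z where "k = nstars C" and "W = wrap C"
    and "X = lead_fix n W" and "Z = end_fix n W"
  define Y where "Y = lead_fix n Z"
  have W: "nstars W = Suc (Suc k)" and k: "2 \<le> k"
    using assms by (simp_all add: k_def W_def)
  then have X: "nstars X = k" and Z: "nstars Z = k"
    using nstars_lead_fix[of W n] nstars_end_fix[of W n] by (simp_all add: X_def Z_def)
  have "Y = end_fix n X"
    using W k lead_fix_end_fix_commute by (simp add: Y_def X_def Z_def)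
  then have XY: "pair_fix X Y"
    using X k pair_fix_end_fix by simp
  then have Y: "k = Suc (Suc (nstars Y))"
    using X nstars_pair_fix by fastforce
  have rho: "rho n C = (if k mod 4 = n mod 4 then [W, X, Y, Z] else [Z, Y, X, W])"
    unfolding rho_def lam_long[OF assms] by (simp add: k_def W_def X_def Y_def Z_def)
  show ?thesis
  proof (cases "k mod 4 = n mod 4")
    case True
    have "nstars W mod 4 = Suc (Suc n) mod 4"
      using True unfolding W by (simp only: mod_4_Suc_Suc_cancel)
    moreover have "nstars X mod 4 \<noteq> Suc (Suc n) mod 4"
      using True unfolding X by (rule mod_4_ne_Suc_Suc)
    moreover have "nstars Y mod 4 = Suc (Suc n) mod 4"
      using True unfolding Y by (rule mod_4_Suc_Suc_swap[THEN iffD1])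
    ultimately show ?thesis
      using True rho XY k W Z by (simp add: link_def X_def Y_def)
  next
    case False
    have aligned: "k mod 4 = Suc (Suc n) mod 4"
      using par False unfolding k_def by (rule mod_4_Suc_Suc_if_ne)
    then have "nstars Y mod 4 \<noteq> Suc (Suc n) mod 4"
      unfolding Y mod_4_Suc_Suc_cancel by (rule mod_4_ne_Suc_Suc)
    then show ?thesis
      using False aligned rho XY k W X Z by (simp add: link_def X_def Y_def)
  qed
qed

lemma successively_link_rho_empty:
  assumes "nstars C = 0" "even n"
  shows "successively (link (Suc (Suc n))) (rho n C)"
proof -
  define W E where "W = wrap C" and "E = end_fix n W"
  have E: "E = lead_fix n W"
    using assms ffirst_split[of "[]" C "[]"] llast_split[of C "[]" "[]"]
    by (simp add: E_def W_def end_fix_def lead_fix_def wrap_def nstars_eq_0_iff)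
  have W: "nstars W = Suc (Suc (nstars C))" and E_count: "nstars E = nstars C"
    using nstars_end_fix[of W n] by (simp_all add: W_def E_def)
  have rho: "rho n C = (if nstars C mod 4 = n mod 4 then [W, E] else [E, W])"
    by (simp add: rho_def lam_empty[OF assms] W_def E_def)
  show ?thesis
  proof (cases "nstars C mod 4 = n mod 4")
    case True
    then have "nstars W mod 4 = Suc (Suc n) mod 4"
      unfolding W by (simp only: mod_4_Suc_Suc_cancel)
    then show ?thesis
      using True rho E W by (simp add: link_def)
  next
    case False
    have "nstars C mod 2 = n mod 2"
      using assms by (simp add: even_iff_mod_2_eq_zero)
    then have "nstars E mod 4 = Suc (Suc n) mod 4"
      using False unfolding E_count by (rule mod_4_Suc_Suc_if_ne)
    then show ?thesis
      using False rho E W by (simp add: link_def)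
  qed
qed

lemma successively_link_rho_single:
  assumes "nstars C = 1" "odd n"
  shows "successively (link (Suc (Suc n))) (rho n C)"
proof -
  obtain u v where C: "C = u @ Star # v" "Star \<notin> set u" "Star \<notin> set v"
    using assms(1) by (rule single_star)
  define W L F where "W = wrap C" and "L = lead_fix n W" and "F = end_fix n W"
  have "L = Star # u @ Zero # v @ [One]" "F = Zero # u @ One # v @ [Star]"
    using assms C by (simp_all add: W_def L_def F_def lead_fix_def end_fix_def wrap_def
        ffirst_def llast_def)
  then have shift: "star_shift L F"
    using star_shiftI[of "[]" u v "[]"] C by simp
  have W: "nstars W = Suc (Suc (nstars C))"
    by (simp add: W_def)
  have L: "nstars L = nstars C" and F: "nstars F = nstars C"
    using shift nstars_star_shift assms(1) by simp_all
  have rho: "rho n C = (if nstars C mod 4 = n mod 4 then [W, L, F] else [F, L, W])"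
    by (simp add: rho_def lam_single[OF assms] W_def L_def F_def)
  show ?thesis
  proof (cases "nstars C mod 4 = n mod 4")
    case True
    have "nstars W mod 4 = Suc (Suc n) mod 4"
      using True unfolding W by (simp only: mod_4_Suc_Suc_cancel)
    moreover have "nstars L mod 4 \<noteq> Suc (Suc n) mod 4"
      using True unfolding L by (rule mod_4_ne_Suc_Suc)
    ultimately show ?thesis
      using True rho shift W by (simp add: link_def L_def)
  next
    case False
    have "nstars C mod 2 = n mod 2"
      using assms by (simp add: odd_iff_mod_2_eq_one)
    then have "nstars C mod 4 = Suc (Suc n) mod 4"
      using False by (rule mod_4_Suc_Suc_if_ne)
    then show ?thesis
      using False rho shift W L F assms(2) by (simp add: link_def L_def)
  qed
qed

lemma successively_link_rho:
  assumes "nstars C mod 2 = n mod 2"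
  shows "successively (link (Suc (Suc n))) (rho n C)"
  by (rule nstars_parity_cases[OF assms])
    (simp_all add: assms successively_link_rho_long successively_link_rho_empty
      successively_link_rho_single)

lemma end_fix_wrap_lead_fix:
  assumes "2 \<le> nstars D" "nstars D mod 2 = n mod 2"
  shows "pair_fix (end_fix n (wrap D)) (end_fix n (wrap (lead_fix n D)))
    \<or> pair_fix_shift (end_fix n (wrap D)) (end_fix n (wrap (lead_fix n D)))"
proof (cases "even n")
  case True
  obtain u v m where D: "D = u @ Star # v @ Star # m" "Star \<notin> set u" "Star \<notin> set v"
    using assms(1) by (rule first_two_stars)
  then have lead: "lead_fix n D = u @ Zero # v @ One # m"
    using True by (simp add: lead_fix_def ffirst_split)
  show ?thesis
  proof (cases "Star \<in> set m")
    case True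
    then obtain p q where "m = p @ Star # q" "Star \<notin> set q"
      using split_list_last by metis
    then have "pair_fix (end_fix n (wrap D)) (end_fix n (wrap (lead_fix n D)))"
      using pair_fixI[of "Star # u" v "p @ Zero # q @ [One]"] D lead \<open>even n\<close>
      by (simp add: end_fix_def wrap_def llast_def)
    then show ?thesis ..
  next
    case False
    then have "pair_fix_shift (end_fix n (wrap D)) (end_fix n (wrap (lead_fix n D)))"
      using pair_fix_shiftI[of "[]" u v "m @ [One]"] D lead \<open>even n\<close>
      by (simp add: end_fix_def wrap_def llast_def)
    then show ?thesis ..
  qed
next
  case False
  obtain u v m where D: "D = u @ Star # v @ Star # m" "Star \<notin> set v" "Star \<notin> set m"
    using assms(1) by (rule last_two_stars)
  then have lead: "lead_fix n D = u @ Zero # v @ One # m"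
    using False by (simp add: lead_fix_def llast_split)
  have "nstars u mod 2 = n mod 2"
    using assms(2) D by simp
  then have "0 < nstars u"
    using False by (auto simp: odd_iff_mod_2_eq_one intro: gr0I)
  then obtain p q where "u = p @ Star # q" "Star \<notin> set p"
    using star_in_set split_list_first by metis
  then have "pair_fix (end_fix n (wrap D)) (end_fix n (wrap (lead_fix n D)))"
    using pair_fixI[of "Zero # p @ One # q" v "m @ [Star]"] D lead False
    by (simp add: end_fix_def wrap_def ffirst_def)
  then show ?thesis ..
qed

lemma pair_fix_shift_wrap_end_fix:
  assumes "star_shift x y" "odd n"
  shows "pair_fix_shift (wrap x) (end_fix n (wrap y))"
proof -
  obtain a b c d where "x = a @ Star # b @ Zero # c @ One # d" "y = a @ Zero # b @ One # c @ Star # d"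
    and "Star \<notin> set a" "Star \<notin> set b" "Star \<notin> set c"
    using assms(1) unfolding star_shift_def by blast
  then show ?thesis
    using pair_fix_shiftI[of "[]" a b "c @ One # d @ [Star]"] assms(2)
    by (simp add: end_fix_def wrap_def ffirst_def)
qed

lemma link_last_hd_rho_aligned:
  assumes par: "nstars D mod 2 = n mod 2" and par': "nstars D' mod 2 = n mod 2"
    and link: "link n D D'" and aligned: "nstars D mod 4 = n mod 4"
  shows "link (Suc (Suc n)) (last (rho n D)) (hd (rho n D'))"
proof -
  have last: "last (rho n D) = end_fix n (wrap D)"
    using last_rho[OF par] aligned by simp
  have "nstars (end_fix n (wrap D)) = nstars D"
    using nstars_end_fix[of "wrap D" n] by simp
  then have last_not_aligned: "nstars (last (rho n D)) mod 4 \<noteq> Suc (Suc n) mod 4"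
    using aligned mod_4_ne_Suc_Suc unfolding last by simp
  from link aligned consider
      (lead) "2 \<le> nstars D" "D' = lead_fix n D"
    | (lead') "2 \<le> nstars D'" "D = lead_fix n D'"
    | (shift) "odd n" "star_shift D' D"
    unfolding link_def by auto
  then show ?thesis
  proof cases
    case lead
    then have "nstars D' mod 4 \<noteq> n mod 4"
      using aligned nstars_lead_fix[of D n] mod_4_Suc_Suc_swap mod_4_ne_Suc_Suc
      by (metis add_2_eq_Suc')
    then have "hd (rho n D') = end_fix n (wrap D')"
      using hd_rho[OF par'] by simp
    then show ?thesis
      using last_not_aligned end_fix_wrap_lead_fix[OF lead(1) par] lead(2)
      unfolding link_def last by auto
  next
    case lead'
    then have "nstars D' mod 4 \<noteq> n mod 4"
      using aligned nstars_lead_fix[of D' n] mod_4_Suc_Suc_cancel mod_4_ne_Suc_Suc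
      by (metis add_2_eq_Suc')
    then have "hd (rho n D') = end_fix n (wrap D')"
      using hd_rho[OF par'] by simp
    then show ?thesis
      using last_not_aligned end_fix_wrap_lead_fix[OF lead'(1) par'] lead'(2)
      unfolding link_def last by auto
  next
    case shift
    then have "nstars D' = nstars D"
      using nstars_star_shift by simp
    then have "hd (rho n D') = wrap D'"
      using hd_rho[OF par'] aligned by simp
    then show ?thesis
      using last_not_aligned pair_fix_shift_wrap_end_fix[OF shift(2,1)]
      unfolding link_def last by auto
  qed
qed

lemma link_last_hd_rho_not_aligned:
  assumes par: "nstars D mod 2 = n mod 2" and par': "nstars D' mod 2 = n mod 2"
    and link: "link n D D'" and not_aligned: "nstars D mod 4 \<noteq> n mod 4"
  shows "link (Suc (Suc n)) (last (rho n D)) (hd (rho n D'))"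
proof -
  have last: "last (rho n D) = wrap D"
    using last_rho[OF par] not_aligned by simp
  have last_not_aligned: "nstars (last (rho n D)) mod 4 \<noteq> Suc (Suc n) mod 4"
    using not_aligned unfolding last by (simp add: mod_4_Suc_Suc_cancel)
  have aligned_next: "nstars D mod 4 = Suc (Suc n) mod 4"
    using par not_aligned by (rule mod_4_Suc_Suc_if_ne)
  have hd_wrap: "hd (rho n D') = wrap D'"
    if "nstars D = Suc (Suc (nstars D')) \<or> nstars D' = Suc (Suc (nstars D))"
  proof -
    from that have "nstars D' mod 4 = n mod 4"
    proof
      assume "nstars D = Suc (Suc (nstars D'))"
      then show ?thesis
        using aligned_next by (simp only: mod_4_Suc_Suc_cancel)
    next
      assume "nstars D' = Suc (Suc (nstars D))"
      then show ?thesis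
        using aligned_next mod_4_Suc_Suc_swap by metis
    qed
    then show ?thesis
      using hd_rho[OF par'] by simp
  qed
  from link not_aligned
  have "pair_fix D D' \<or> pair_fix D' D \<or> pair_fix_shift D D' \<or> pair_fix_shift D' D \<or> star_shift D D'"
    unfolding link_def by simp
  then show ?thesis
  proof (elim disjE)
    assume "star_shift D D'"
    moreover from this have "nstars D' = nstars D" "odd n"
      using nstars_star_shift par by auto
    moreover from this have "hd (rho n D') = end_fix n (wrap D')"
      using hd_rho[OF par'] not_aligned by simp
    ultimately show ?thesis
      using last_not_aligned pair_fix_shift_wrap_end_fix unfolding link_def last by auto
  qed (use last_not_aligned hd_wrap nstars_pair_fix nstars_pair_fix_shift pair_fix_wrap
      pair_fix_shift_wrap in \<open>auto simp: link_def last\<close>)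
qed

lemma link_last_hd_rho:
  "nstars D mod 2 = n mod 2 \<Longrightarrow> nstars D' mod 2 = n mod 2 \<Longrightarrow> link n D D' \<Longrightarrow>
    link (Suc (Suc n)) (last (rho n D)) (hd (rho n D'))"
  using link_last_hd_rho_aligned link_last_hd_rho_not_aligned by blast

lemma successively_concat_map:
  assumes "\<And>x. x \<in> set xs \<Longrightarrow> f x \<noteq> []"
    and "\<And>x. x \<in> set xs \<Longrightarrow> successively R (f x)"
    and "successively (\<lambda>x y. R (last (f x)) (hd (f y))) xs"
  shows "successively R (concat (map f xs))"
  using assms
proof (induction xs rule: induct_list012)
  case (3 x y zs)
  then have "successively R (concat (map f (y # zs)))" and "f y \<noteq> []"
    by simp_all
  with 3 show ?case
    by (simp add: successively_append_iff)
qed simp_all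

lemma nstars_mod_2_rho:
  assumes par: "nstars C mod 2 = n mod 2" and x: "x \<in> set (rho n C)"
  shows "nstars x mod 2 = n mod 2"
proof -
  from x have x: "x \<in> set (lam n C)"
    by (simp add: rho_def split: if_splits)
  have counts: "nstars (lead_fix n (wrap C)) = nstars C" "nstars (end_fix n (wrap C)) = nstars C"
    using nstars_lead_fix[of "wrap C" n] nstars_end_fix[of "wrap C" n] by simp_all
  show ?thesis
  proof (cases rule: nstars_parity_cases[OF par])
    case long: 1
    have "nstars C = Suc (Suc (nstars (lead_fix n (end_fix n (wrap C)))))"
      using nstars_lead_fix[of "end_fix n (wrap C)" n] counts(2) long by simp
    then have "nstars (lead_fix n (end_fix n (wrap C))) mod 2 = n mod 2"
      using par by simp
    then show ?thesis
      using x par counts unfolding lam_long[OF long par] by auto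
  next
    case 2
    then show ?thesis
      using x par counts unfolding lam_empty[OF 2] by auto
  next
    case 3
    then show ?thesis
      using x par counts unfolding lam_single[OF 3] by auto
  qed
qed

lemma link_Lambda:
  "successively (link n) (Lambda n) \<and> (\<forall>x \<in> set (Lambda n). nstars x mod 2 = n mod 2)"
proof (induction n rule: Lambda.induct)
  case (3 n)
  then have links: "successively (link n) (Lambda n)"
    and par: "\<And>x. x \<in> set (Lambda n) \<Longrightarrow> nstars x mod 2 = n mod 2"
    by auto
  have "successively (link (Suc (Suc n))) (concat (map (rho n) (Lambda n)))"
  proof (rule successively_concat_map)
    show "rho n x \<noteq> []" for x
      by (simp add: rho_def lam_def)
    show "successively (link (Suc (Suc n))) (rho n x)" if "x \<in> set (Lambda n)" for x
      using successively_link_rho par that by blast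
    show "successively (\<lambda>x y. link (Suc (Suc n)) (last (rho n x)) (hd (rho n y))) (Lambda n)"
      using links by (rule successively_mono) (use link_last_hd_rho par in blast)
  qed
  moreover have "\<forall>x \<in> set (concat (map (rho n) (Lambda n))). nstars x mod 2 = n mod 2"
  proof
    fix x
    assume "x \<in> set (concat (map (rho n) (Lambda n)))"
    then obtain C where "C \<in> set (Lambda n)" "x \<in> set (rho n C)"
      by auto
    then show "nstars x mod 2 = n mod 2"
      using par nstars_mod_2_rho by blast
  qed
  ultimately show ?case
    by simp
qed simp_all

theorem theorem23:
  fixes n :: nat
  assumes "n \<ge> 1"
  shows "\<forall>i. Suc i < length (Lambda n) \<longrightarrow>
           hamming (Lambda n ! i) (Lambda n ! Suc i) \<le> 3"
proof (intro allI impI)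
  fix i
  assume "Suc i < length (Lambda n)"
  then have "link n (Lambda n ! i) (Lambda n ! Suc i)"
    using link_Lambda[of n] successively_nth by blast
  then show "hamming (Lambda n ! i) (Lambda n ! Suc i) \<le> 3"
    by (rule hamming_link)
qed

end
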